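(* Let $\mathbf{E}\subseteq\mathbf{A}$ be finite symmetric integral relation algebras. For every $n\in\omega$, the set $$\{1'\}\cup\{x^{(i)}:x\text{ a diversity atom of }\mathbf{A},\ i<n\}\cup\{J(a,n):a\text{ a diversity atom of }\mathbf{A}\}$$ is the set of atoms of a subalgebra of $\mathbf{C}_{\mathbf{E}}(\mathbf{A})$.
   Context: Relation algebras are in the sense of Tarski; $1'$ identity, $0'$ its complement, $;$ relative product; integral: $1'$ is an atom; symmetric: $x^{\smile}=x$; a diversity atom is an atom below $0'$. The algebra $\mathbf{C}_{\mathbf{E}}(\mathbf{A})$: for each atom $x$ of $\mathbf{A}$ let $c(x)$ be the atom of $\mathbf{E}$ with $x\le c(x)$; $T(i,j,k)$ iff $(i\le j=k)$ or $(j\le k=i)$ or $(k\le i=j)$. Atoms: $1'$ and $x^{(i)}$ for diversity atoms $x$ of $\mathbf{A}$ and $i\in\omega$ (distinct formal symbols). $C$ is the set of all permutations of $(1',1',1')$, $(1',x^{(i)},x^{(i)})$, and $(x^{(i)},y^{(j)},z^{(k)})$ with $x;y\ge z$ in $\mathbf{A}$ and ($c(x)=c(y)=c(z)\Rightarrow T(i,j,k)$). $\mathbf{C}_{\mathbf{E}}(\mathbf{A})$ is the algebra of all sets of atoms with set Boolean operations, identity $\{1'\}$, converse the identity map, and $X;Y=\{w:\exists u\in X,\exists v\in Y,(u,v,w)\in C\}$. For $a\in\mathbf{A}$ and $n\in\omega$, $J(a,n)$ is the join of all $x^{(i)}$ with $x$ a diversity atom of $\mathbf{A}$, $x\le a$,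 $n\le i$, together with $1'$ if $1'\le a$. *)

theory Defs
  imports Main
begin

definition relation_algebra ::
  "('a::boolean_algebra \<Rightarrow> 'a \<Rightarrow> 'a) \<Rightarrow> 'a \<Rightarrow> ('a \<Rightarrow> 'a) \<Rightarrow> bool" where
  "relation_algebra rp e conv \<longleftrightarrow>
     (\<forall>x y z. rp (rp x y) z = rp x (rp y z)) \<and>
     (\<forall>x y z. rp (sup x y) z = sup (rp x z) (rp y z)) \<and>
     (\<forall>x. rp x e = x) \<and>
     (\<forall>x. conv (conv x) = x) \<and>
     (\<forall>x y. conv (sup x y) = sup (conv x) (conv y)) \<and>
     (\<forall>x y. conv (rp x y) = rp (conv y) (conv x)) \<and>
     (\<forall>x y. rp (conv x) (- (rp x y)) \<le> - y)"

definition is_atom :: "'a::boolean_algebra \<Rightarrow> bool" where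
  "is_atom x \<longleftrightarrow> x \<noteq> bot \<and> (\<forall>y. y \<le> x \<longrightarrow> y = bot \<or> y = x)"

definition integral_ra :: "'a::boolean_algebra \<Rightarrow> bool" where
  "integral_ra e \<longleftrightarrow> is_atom e"

definition symmetric_ra :: "('a::boolean_algebra \<Rightarrow> 'a) \<Rightarrow> bool" where
  "symmetric_ra conv \<longleftrightarrow> (\<forall>x. conv x = x)"

definition diversity_atom :: "'a::boolean_algebra \<Rightarrow> 'a \<Rightarrow> bool" where
  "diversity_atom e x \<longleftrightarrow> is_atom x \<and> x \<le> - e"

definition ra_subalgebra ::
  "'a::boolean_algebra set \<Rightarrow> ('a \<Rightarrow> 'a \<Rightarrow> 'a) \<Rightarrow> 'a \<Rightarrow> ('a \<Rightarrow> 'a) \<Rightarrow> bool" where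
  "ra_subalgebra E rp e conv \<longleftrightarrow>
     bot \<in> E \<and> top \<in> E \<and> e \<in> E \<and>
     (\<forall>x\<in>E. \<forall>y\<in>E. sup x y \<in> E) \<and>
     (\<forall>x\<in>E. \<forall>y\<in>E. inf x y \<in> E) \<and>
     (\<forall>x\<in>E. - x \<in> E) \<and>
     (\<forall>x\<in>E. \<forall>y\<in>E. rp x y \<in> E) \<and>
     (\<forall>x\<in>E. conv x \<in> E)"

definition atom_in :: "'a::boolean_algebra set \<Rightarrow> 'a \<Rightarrow> bool" where
  "atom_in E x \<longleftrightarrow> x \<in> E \<and> x \<noteq> bot \<and> (\<forall>y\<in>E. y \<le> x \<longrightarrow> y = bot \<or> y = x)"

definition cE :: "'a::boolean_algebra set \<Rightarrow> 'a \<Rightarrow> 'a" where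
  "cE E x = (THE z. atom_in E z \<and> x \<le> z)"

definition Tpred :: "nat \<Rightarrow> nat \<Rightarrow> nat \<Rightarrow> bool" where
  "Tpred i j k \<longleftrightarrow> (i \<le> j \<and> j = k) \<or> (j \<le> k \<and> k = i) \<or> (k \<le> i \<and> i = j)"

text \<open>Atoms of C_E(A): CId is 1', CAt x i is x^(i).\<close>
datatype 'a catom = CId | CAt 'a nat

definition C_atoms :: "'a::boolean_algebra \<Rightarrow> 'a catom set" where
  "C_atoms e = {CId} \<union> {CAt x i | x i. diversity_atom e x}"

definition C_base ::
  "'a::boolean_algebra set \<Rightarrow> ('a \<Rightarrow> 'a \<Rightarrow> 'a) \<Rightarrow> 'a \<Rightarrow> 'a catom \<Rightarrow> 'a catom \<Rightarrow> 'a catom \<Rightarrow> bool" where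
  "C_base E rp e u v w \<longleftrightarrow>
     (u = CId \<and> v = CId \<and> w = CId) \<or>
     (\<exists>x i. diversity_atom e x \<and> u = CId \<and> v = CAt x i \<and> w = CAt x i) \<or>
     (\<exists>x y z i j k. diversity_atom e x \<and> diversity_atom e y \<and> diversity_atom e z \<and>
        u = CAt x i \<and> v = CAt y j \<and> w = CAt z k \<and> z \<le> rp x y \<and>
        ((cE E x = cE E y \<and> cE E y = cE E z) \<longrightarrow> Tpred i j k))"

definition C_cyc ::
  "'a::boolean_algebra set \<Rightarrow> ('a \<Rightarrow> 'a \<Rightarrow> 'a) \<Rightarrow> 'a \<Rightarrow> 'a catom \<Rightarrow> 'a catom \<Rightarrow> 'a catom \<Rightarrow> bool" where
  "C_cyc E rp e u v w \<longleftrightarrow>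
     C_base E rp e u v w \<or> C_base E rp e u w v \<or> C_base E rp e v u w \<or>
     C_base E rp e v w u \<or> C_base E rp e w u v \<or> C_base E rp e w v u"

text \<open>Relative product in C_E(A); converse is the identity map; identity is {CId};
  Boolean operations are the set operations on subsets of C_atoms e.\<close>
definition C_comp ::
  "'a::boolean_algebra set \<Rightarrow> ('a \<Rightarrow> 'a \<Rightarrow> 'a) \<Rightarrow> 'a \<Rightarrow> 'a catom set \<Rightarrow> 'a catom set \<Rightarrow> 'a catom set" where
  "C_comp E rp e X Y = {w. \<exists>u\<in>X. \<exists>v\<in>Y. C_cyc E rp e u v w}"

definition C_subalgebra ::
  "'a::boolean_algebra set \<Rightarrow> ('a \<Rightarrow> 'a \<Rightarrow> 'a) \<Rightarrow> 'a \<Rightarrow> 'a catom set set \<Rightarrow> bool" where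
  "C_subalgebra E rp e S \<longleftrightarrow>
     S \<subseteq> Pow (C_atoms e) \<and>
     {} \<in> S \<and> C_atoms e \<in> S \<and> {CId} \<in> S \<and>
     (\<forall>X\<in>S. \<forall>Y\<in>S. X \<union> Y \<in> S) \<and>
     (\<forall>X\<in>S. \<forall>Y\<in>S. X \<inter> Y \<in> S) \<and>
     (\<forall>X\<in>S. C_atoms e - X \<in> S) \<and>
     (\<forall>X\<in>S. \<forall>Y\<in>S. C_comp E rp e X Y \<in> S)"

definition atoms_of_C :: "'b set set \<Rightarrow> 'b set set" where
  "atoms_of_C S = {X \<in> S. X \<noteq> {} \<and> (\<forall>Y\<in>S. Y \<subseteq> X \<longrightarrow> Y = {} \<or> Y = X)}"

definition Jset :: "'a::boolean_algebra \<Rightarrow> 'a \<Rightarrow> nat \<Rightarrow> 'a catom set" where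
  "Jset e a n = {CAt x i | x i. diversity_atom e x \<and> x \<le> a \<and> n \<le> i}
                \<union> (if e \<le> a then {CId} else {})"

end

theory Submission
  imports Defs
begin

text \<open>Partition the atoms of C_E(A) into the singletons {1'} and {x^(i)} for i < n, and the
  blocks {x^(i) : n \<le> i}, which are the sets J(x,n). The unions of blocks form a Boolean
  subalgebra whose atoms are the blocks. It is closed under relative product because relabelling
  indices by a monotone map preserves the condition T and hence maps cycles to cycles: collapsing
  all indices \<ge> n to a single k \<ge> n turns a cycle ending in z^(k') with k' \<ge> n into one ending
  in z^(k), while keeping the other two entries in their blocks.\<close>

definition saturated_sets :: "'b set \<Rightarrow> ('b \<Rightarrow> 'b set) \<Rightarrow> 'b set set" where
  "saturated_sets U B = {X. X \<subseteq> U \<and> (\<forall>w\<in>X. B w \<subseteq> X)}"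

locale block_partition =
  fixes U :: "'b set" and B :: "'b \<Rightarrow> 'b set"
  assumes block_self: "w \<in> U \<Longrightarrow> w \<in> B w"
    and block_subset: "w \<in> U \<Longrightarrow> B w \<subseteq> U"
    and block_eq: "w \<in> U \<Longrightarrow> u \<in> B w \<Longrightarrow> B u = B w"
begin

lemma saturated_sets_Un: "X \<in> saturated_sets U B \<Longrightarrow> Y \<in> saturated_sets U B \<Longrightarrow>
    X \<union> Y \<in> saturated_sets U B"
  and saturated_sets_Int: "X \<in> saturated_sets U B \<Longrightarrow> Y \<in> saturated_sets U B \<Longrightarrow>
    X \<inter> Y \<in> saturated_sets U B"
  unfolding saturated_sets_def by blast+

lemma saturated_sets_Diff:
  assumes "X \<in> saturated_sets U B"
  shows "U - X \<in> saturated_sets U B"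
  unfolding saturated_sets_def
proof (intro CollectI conjI ballI subsetI)
  fix w u assume w: "w \<in> U - X" and u: "u \<in> B w"
  have "u \<notin> X"
  proof
    assume "u \<in> X"
    then have "B w \<subseteq> X"
      using assms block_eq[OF _ u] w unfolding saturated_sets_def by auto
    then show False using block_self w by blast
  qed
  then show "u \<in> U - X" using block_subset u w by blast
qed blast

lemma block_in_saturated_sets: "w \<in> U \<Longrightarrow> B w \<in> saturated_sets U B"
  unfolding saturated_sets_def using block_subset block_eq by blast

lemma atoms_of_saturated_sets: "atoms_of_C (saturated_sets U B) = B ` U"
proof
  show "atoms_of_C (saturated_sets U B) \<subseteq> B ` U"
  proof
    fix X assume X: "X \<in> atoms_of_C (saturated_sets U B)"
    then obtain w where "w \<in> X" unfolding atoms_of_C_def by blast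
    with X have "w \<in> U" and "B w \<subseteq> X"
      unfolding atoms_of_C_def saturated_sets_def by blast+
    with X have "B w = X"
      using block_in_saturated_sets block_self unfolding atoms_of_C_def by blast
    with \<open>w \<in> U\<close> show "X \<in> B ` U" by blast
  qed
  show "B ` U \<subseteq> atoms_of_C (saturated_sets U B)"
  proof
    fix X assume "X \<in> B ` U"
    then obtain w where w: "w \<in> U" and X: "X = B w" by blast
    have "Y = X" if "Y \<in> saturated_sets U B" "Y \<subseteq> X" "u \<in> Y" for Y u
      using that block_eq[OF w] unfolding X saturated_sets_def by blast
    then show "X \<in> atoms_of_C (saturated_sets U B)"
      unfolding atoms_of_C_def using block_in_saturated_sets[OF w] block_self[OF w] X by blast
  qed
qed

end

lemma Tpred_mono_image:
  assumes "mono f" and "Tpred i j k"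
  shows "Tpred (f i) (f j) (f k)"
  using assms unfolding Tpred_def mono_def by metis

fun reindex :: "(nat \<Rightarrow> nat) \<Rightarrow> 'a catom \<Rightarrow> 'a catom" where
  "reindex f CId = CId"
| "reindex f (CAt x i) = CAt x (f i)"

lemma C_base_reindex:
  assumes "mono f" and "C_base E rp e u v w"
  shows "C_base E rp e (reindex f u) (reindex f v) (reindex f w)"
proof -
  from assms(2) consider
      "u = CId" "v = CId" "w = CId"
    | x i where "diversity_atom e x" "u = CId" "v = CAt x i" "w = CAt x i"
    | x y z i j k where "diversity_atom e x" "diversity_atom e y" "diversity_atom e z"
        "u = CAt x i" "v = CAt y j" "w = CAt z k" "z \<le> rp x y"
        "cE E x = cE E y \<and> cE E y = cE E z \<longrightarrow> Tpred i j k"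
    unfolding C_base_def by blast
  then show ?thesis
  proof cases
    case (3 x y z i j k)
    then show ?thesis
      using Tpred_mono_image[OF assms(1), of i j k] unfolding C_base_def by simp
  qed (simp_all add: C_base_def)
qed

lemma C_cyc_reindex:
  "mono f \<Longrightarrow> C_cyc E rp e u v w \<Longrightarrow> C_cyc E rp e (reindex f u) (reindex f v) (reindex f w)"
  unfolding C_cyc_def using C_base_reindex by metis

lemma C_cyc_in_C_atoms: "C_cyc E rp e u v w \<Longrightarrow> w \<in> C_atoms e"
  unfolding C_cyc_def C_base_def C_atoms_def by auto

fun cblock :: "nat \<Rightarrow> 'a catom \<Rightarrow> 'a catom set" where
  "cblock n CId = {CId}"
| "cblock n (CAt x i) = (if i < n then {CAt x i} else {CAt x j | j. n \<le> j})"

lemma block_partition_cblock: "block_partition (C_atoms e) (cblock n)"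
proof
  show "w \<in> cblock n w" for w :: "'a catom"
    by (cases w) auto
  show "cblock n w \<subseteq> C_atoms e" if "w \<in> C_atoms e" for w
    using that unfolding C_atoms_def by (cases w) auto
  show "cblock n u = cblock n w" if "u \<in> cblock n w" for u w :: "'a catom"
    using that by (cases w; cases u) (auto split: if_splits)
qed

definition collapse :: "nat \<Rightarrow> nat \<Rightarrow> nat \<Rightarrow> nat" where
  "collapse n k i = (if n \<le> i then k else i)"

lemma mono_collapse: "n \<le> k \<Longrightarrow> mono (collapse n k)"
  unfolding collapse_def by (rule monoI) auto

lemma reindex_collapse_in_cblock: "n \<le> k \<Longrightarrow> reindex (collapse n k) u \<in> cblock n u"
  by (cases u) (auto simp: collapse_def)

lemma C_comp_saturated_sets:
  assumes X: "X \<in> saturated_sets (C_atoms e) (cblock n)"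
    and Y: "Y \<in> saturated_sets (C_atoms e) (cblock n)"
  shows "C_comp E rp e X Y \<in> saturated_sets (C_atoms e) (cblock n)"
  unfolding saturated_sets_def
proof (intro CollectI conjI ballI subsetI)
  show "w \<in> C_atoms e" if "w \<in> C_comp E rp e X Y" for w
    using that C_cyc_in_C_atoms unfolding C_comp_def by blast
  fix w w' assume w: "w \<in> C_comp E rp e X Y" and w': "w' \<in> cblock n w"
  from w obtain u v where uv: "u \<in> X" "v \<in> Y" "C_cyc E rp e u v w"
    unfolding C_comp_def by blast
  show "w' \<in> C_comp E rp e X Y"
  proof (cases "w' = w")
    case False
    then obtain z k k' where zk: "w = CAt z k" "w' = CAt z k'" "n \<le> k'"
      using w' by (cases w) (auto split: if_splits)
    let ?g = "reindex (collapse n k')"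
    have "?g w = w'" using w' zk by (auto simp: collapse_def split: if_splits)
    moreover have "?g u \<in> X" "?g v \<in> Y"
      using reindex_collapse_in_cblock[OF zk(3)] uv X Y unfolding saturated_sets_def by blast+
    moreover have "C_cyc E rp e (?g u) (?g v) (?g w)"
      using C_cyc_reindex[OF mono_collapse[OF zk(3)] uv(3)] .
    ultimately show ?thesis unfolding C_comp_def by blast
  qed (use w in simp)
qed

lemma C_subalgebra_saturated_sets: "C_subalgebra E rp e (saturated_sets (C_atoms e) (cblock n))"
proof -
  interpret block_partition "C_atoms e" "cblock n" by (rule block_partition_cblock)
  have empty: "{} \<in> saturated_sets (C_atoms e) (cblock n)"
    and identity: "{CId} \<in> saturated_sets (C_atoms e) (cblock n)"
    and sub_Pow: "saturated_sets (C_atoms e) (cblock n) \<subseteq> Pow (C_atoms e)"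
    unfolding saturated_sets_def C_atoms_def by auto
  have top: "C_atoms e \<in> saturated_sets (C_atoms e) (cblock n)"
    using saturated_sets_Diff[OF empty] by simp
  show ?thesis
    unfolding C_subalgebra_def
    by (intro conjI ballI empty identity sub_Pow top saturated_sets_Un saturated_sets_Int
        saturated_sets_Diff C_comp_saturated_sets) assumption+
qed

lemma diversity_atom_not_above_identity:
  assumes "is_atom e" and "diversity_atom e a"
  shows "\<not> e \<le> a"
proof
  assume "e \<le> a"
  then have "e \<le> - e" using assms(2) unfolding diversity_atom_def by (meson order_trans)
  then have "e = bot" by (metis inf.orderE inf_compl_bot)
  then show False using assms(1) unfolding is_atom_def by simp
qed

lemma Jset_eq_cblock:
  assumes "is_atom e" and a: "diversity_atom e a"
  shows "Jset e a n = cblock n (CAt a n)"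
proof -
  have "x = a" if "diversity_atom e x" "x \<le> a" for x
    using that a unfolding diversity_atom_def is_atom_def by blast
  then show ?thesis
    unfolding Jset_def using diversity_atom_not_above_identity[OF assms] a by auto
qed

lemma cblock_image_C_atoms:
  assumes "is_atom e"
  shows "cblock n ` C_atoms e =
           {{CId}} \<union> {{CAt x i} | x i. diversity_atom e x \<and> i < n}
           \<union> {Jset e a n | a. diversity_atom e a}" (is "_ = ?A")
proof
  show "cblock n ` C_atoms e \<subseteq> ?A"
  proof
    fix X assume "X \<in> cblock n ` C_atoms e"
    then obtain w where w: "w \<in> C_atoms e" and X: "X = cblock n w" by blast
    show "X \<in> ?A"
    proof (cases w)
      case (CAt x i)
      with w have "diversity_atom e x" unfolding C_atoms_def by simp
      then show ?thesis
        using X CAt Jset_eq_cblock[OF assms, of x n] by (cases "i < n") auto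
    qed (use X in simp)
  qed
  have CAt_in: "CAt x i \<in> C_atoms e" if "diversity_atom e x" for x i
    using that unfolding C_atoms_def by blast
  show "?A \<subseteq> cblock n ` C_atoms e"
  proof
    fix X assume "X \<in> ?A"
    then consider "X = {CId}"
      | x i where "diversity_atom e x" "i < n" "X = {CAt x i}"
      | a where "diversity_atom e a" "X = Jset e a n"
      by blast
    then show "X \<in> cblock n ` C_atoms e"
    proof cases
      case 1
      then show ?thesis by (intro rev_image_eqI[of CId]) (auto simp: C_atoms_def)
    next
      case (2 x i)
      then show ?thesis by (intro rev_image_eqI[OF CAt_in]) auto
    next
      case (3 a)
      then show ?thesis using Jset_eq_cblock[OF assms] by (intro rev_image_eqI[OF CAt_in]) auto
    qed
  qed
qed

theorem lemma5:
  fixes rp :: "'a::{finite, boolean_algebra} \<Rightarrow> 'a \<Rightarrow> 'a"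
    and e :: 'a and conv :: "'a \<Rightarrow> 'a"
    and E :: "'a set" and n :: nat
  assumes "relation_algebra rp e conv"
    and "symmetric_ra conv" and "integral_ra e"
    and "ra_subalgebra E rp e conv"
    and "\<forall>x\<in>E. conv x = x" and "atom_in E e"
  shows "\<exists>S. C_subalgebra E rp e S \<and>
           atoms_of_C S =
             {{CId}} \<union> {{CAt x i} | x i. diversity_atom e x \<and> i < n}
             \<union> {Jset e a n | a. diversity_atom e a}"
proof (intro exI conjI)
  show "C_subalgebra E rp e (saturated_sets (C_atoms e) (cblock n))"
    by (rule C_subalgebra_saturated_sets)
  have "is_atom e" using \<open>integral_ra e\<close> unfolding integral_ra_def .
  have "atoms_of_C (saturated_sets (C_atoms e) (cblock n)) = cblock n ` C_atoms e"
    by (rule block_partition.atoms_of_saturated_sets[OF block_partition_cblock])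
  also have "\<dots> = {{CId}} \<union> {{CAt x i} | x i. diversity_atom e x \<and> i < n}
      \<union> {Jset e a n | a. diversity_atom e a}"
    by (rule cblock_image_C_atoms[OF \<open>is_atom e\<close>])
  finally show "atoms_of_C (saturated_sets (C_atoms e) (cblock n)) = \<dots>" .
qed

end
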